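(* For all $n\ge1$ and $p,q\ge0$, the following identities between operators on functions of $(x_0=s,\mathbf x,\mathbf t,\bar{\mathbf t})$ hold up to adding multiplication by a function from $\mathcal F$ (with $\partial_{x_0}=\partial_s$): $$[\partial_{t_n},D_p]=\begin{cases}\frac nk\partial_{t_{(p-1)k+n}},& p\ge1\text{ or }(p=0,\ n>k),\\ \frac nk(k-n)t_{k-n},& p=0,\ n<k,\\ x_0,& p=0,\ n=k,\end{cases}\qquad [D_p,t_n]=\begin{cases}\frac1k\partial_{t_{(p-1)k-n}},& n<(p-1)k,\\ \frac1k(n-(p-1)k)t_{n-(p-1)k},& n>(p-1)k,\\ \frac1kx_0,& n=(p-1)k,\end{cases}$$ $$[\partial_{\bar t_n},D_p]=\begin{cases}\frac nm\partial_{\bar t_{(p-1)m+n}},& p\ge1\text{ or }(p=0,\ n>m),\\ \frac nm(m-n)\bar t_{m-n},& p=0,\ n<m,\\ x_0,& p=0,\ n=m,\end{cases}\qquad [D_p,\bar t_n]=\begin{cases}\frac1m\partial_{\bar t_{(p-1)m-n}},& n<(p-1)m,\\ \frac1m(n-(p-1)m)\bar t_{n-(p-1)m},& n>(p-1)m,\\ \frac1mx_0,& n=(p-1)m,\end{cases}$$ $$[\partial_{x_q},D_p]=\begin{cases}q\partial_{x_{p+q-1}}+\frac1k\partial_{t_{(p+q-1)k}}+\frac1m\partial_{\bar t_{(p+q-1)m}},& p+q>1,\\ q\partial_{x_0}+(\frac1k+\frac1m)x_0,& p+q=1,\\ t_k+\bar t_m,& p=q=0,\end{cases}\qquad [D_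p,x_q]=0.$$
   Context: Fix positive integers $k,m$. Variables: $x_0=s$, $\mathbf x=(x_1,x_2,\dots)$, $\mathbf t=(t_1,t_2,\dots)$, $\bar{\mathbf t}=(\bar t_1,\bar t_2,\dots)$, all independent (in particular $t_{nk}$ and $\bar t_{nm}$ are distinct); $\partial_{x_0}=\partial_s$. $\mathcal F$ is the space of functions $f(s,\mathbf x)$ with $f(s+1,\mathbf x)=f(s,\mathbf x)$ (in particular $x_n\in\mathcal F$ for $n\ge1$). Define $D_0=\frac1k\sum_{n\ge1}\bigl(x_{n+1}\partial_{t_{nk}}+(n+k)t_{n+k}\partial_{t_n}\bigr)+\frac1{2k}\sum_{n=1}^{k-1}nt_n(k-n)t_{k-n}+\frac1m\sum_{n\ge1}\bigl(x_{n+1}\partial_{\bar t_{nm}}+(n+m)\bar t_{n+m}\partial_{\bar t_n}\bigr)+\frac1{2m}\sum_{n=1}^{m-1}n\bar t_n(m-n)\bar t_{m-n}+\sum_{n\ge1}nx_n\partial_{x_{n-1}}+(\frac1k+\frac1m)x_0x_1+x_0(t_k+\bar t_m)$; $D_1=\frac1k\sum_{n\ge1}(x_n\partial_{t_{nk}}+nt_n\partial_{t_n})+\frac1m\sum_{n\ge1}(x_n\partial_{\bar t_{nm}}+n\bar t_n\partial_{\bar t_n})+\sum_{n\ge1}nx_n\partial_{x_n}+(\frac1k+\frac1m)\frac{x_0^2}2$; for $p\ge1$: $D_{p+1}=\sum_{n\ge1}nx_n\partial_{x_{p+n}}+\frac1k\sum_{n\ge0}(x_n\partial_{t_{(p+n)k}}+nt_n\partial_{t_{pk+n}})+\frac1{2k}\sum_{n=1}^{pk-1}\partial_{t_n}\partial_{t_{pk-n}}+\frac1m\sum_{n\ge0}(x_n\partial_{\bar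 t_{(p+n)m}}+n\bar t_n\partial_{\bar t_{pm+n}})+\frac1{2m}\sum_{n=1}^{pm-1}\partial_{\bar t_n}\partial_{\bar t_{pm-n}}$. Brackets are commutators of operators; $t_n,\bar t_n,x_q$ denote multiplication operators. *)

theory Defs
  imports "HOL-Analysis.Analysis"
begin

text \<open>Variables: X 0 is x_0 = s, X n (n >= 1) is x_n, T n is t_n, TB n is bar t_n.
  T 0 and TB 0 are dummy variables (never used by the operators in an essential way,
  and excluded from the domain of functions considered).\<close>

datatype var = X nat | T nat | TB nat

type_synonym pt = "var \<Rightarrow> real"
type_synonym fn = "pt \<Rightarrow> real"
type_synonym oper = "fn \<Rightarrow> fn"

definition valid_var :: "var \<Rightarrow> bool" where
  "valid_var v \<longleftrightarrow> (case v of X n \<Rightarrow> True | T n \<Rightarrow> 1 \<le> n | TB n \<Rightarrow> 1 \<le> n)"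

definition depends_only :: "var set \<Rightarrow> fn \<Rightarrow> bool" where
  "depends_only V f \<longleftrightarrow> (\<forall>a b. (\<forall>v\<in>V. a v = b v) \<longrightarrow> f a = f b)"

definition pd :: "var \<Rightarrow> fn \<Rightarrow> fn" where
  "pd v f a = deriv (\<lambda>h. f (a(v := h))) (a v)"

fun pds :: "var list \<Rightarrow> fn \<Rightarrow> fn" where
  "pds [] f = f"
| "pds (v # vs) f = pd v (pds vs f)"

definition Dom :: "fn set" where
  "Dom = {f. (\<exists>V. finite V \<and> V \<subseteq> Collect valid_var \<and> depends_only V f) \<and>
              (\<forall>vs. continuous_on UNIV (pds vs f) \<and>
                    (\<forall>v a. (\<lambda>h. pds vs f (a(v := h))) differentiable (at (a v))))}"

definition Fsp :: "fn set" where
  "Fsp = {g. depends_only (range X) g \<and> (\<forall>a. g (a(X 0 := a (X 0) + 1)) = g a)}"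

definition modF :: "oper \<Rightarrow> oper \<Rightarrow> bool" where
  "modF A B \<longleftrightarrow> (\<exists>g\<in>Fsp. \<forall>f\<in>Dom. \<forall>a. A f a = B f a + g a * f a)"

definition comm :: "oper \<Rightarrow> oper \<Rightarrow> oper" where
  "comm A B = (\<lambda>f a. A (B f) a - B (A f) a)"

definition pdo :: "var \<Rightarrow> oper" where
  "pdo v = (\<lambda>f a. pd v f a)"

definition mulv :: "var \<Rightarrow> oper" where
  "mulv v = (\<lambda>f a. a v * f a)"

definition scaleo :: "real \<Rightarrow> oper \<Rightarrow> oper" where
  "scaleo c A = (\<lambda>f a. c * A f a)"

text \<open>Building blocks for the t-part (tv = T, kk = k) and bar t-part (tv = TB, kk = m).
  Sums over n >= 1 are written as suminf over n with index shifted by one.\<close>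
definition Tpart0 :: "(nat \<Rightarrow> var) \<Rightarrow> nat \<Rightarrow> oper" where
  "Tpart0 tv kk = (\<lambda>f a.
     1 / real kk * (\<Sum>n. a (X (n + 2)) * pd (tv ((n + 1) * kk)) f a
                       + real (n + 1 + kk) * a (tv (n + 1 + kk)) * pd (tv (n + 1)) f a)
     + 1 / (2 * real kk) * (\<Sum>n = 1..<kk. real n * a (tv n) * real (kk - n) * a (tv (kk - n))) * f a)"

definition Tpart1 :: "(nat \<Rightarrow> var) \<Rightarrow> nat \<Rightarrow> oper" where
  "Tpart1 tv kk = (\<lambda>f a.
     1 / real kk * (\<Sum>n. a (X (n + 1)) * pd (tv ((n + 1) * kk)) f a
                       + real (n + 1) * a (tv (n + 1)) * pd (tv (n + 1)) f a))"

text \<open>For p >= 1 (this is the t-part of D_{p+1}).\<close>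
definition TpartP :: "(nat \<Rightarrow> var) \<Rightarrow> nat \<Rightarrow> nat \<Rightarrow> oper" where
  "TpartP tv kk p = (\<lambda>f a.
     1 / real kk * (\<Sum>n. a (X n) * pd (tv ((p + n) * kk)) f a
                       + real n * a (tv n) * pd (tv (p * kk + n)) f a)
     + 1 / (2 * real kk) * (\<Sum>n = 1..<p * kk. pd (tv n) (pd (tv (p * kk - n)) f) a))"

fun Dop :: "nat \<Rightarrow> nat \<Rightarrow> nat \<Rightarrow> oper" where
  "Dop k m 0 = (\<lambda>f a.
      Tpart0 T k f a + Tpart0 TB m f a
      + (\<Sum>n. real (n + 1) * a (X (n + 1)) * pd (X n) f a)
      + (1 / real k + 1 / real m) * a (X 0) * a (X 1) * f a
      + a (X 0) * (a (T k) + a (TB m)) * f a)"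
| "Dop k m (Suc 0) = (\<lambda>f a.
      Tpart1 T k f a + Tpart1 TB m f a
      + (\<Sum>n. real (n + 1) * a (X (n + 1)) * pd (X (n + 1)) f a)
      + (1 / real k + 1 / real m) * (a (X 0))\<^sup>2 / 2 * f a)"
| "Dop k m (Suc (Suc p)) = (\<lambda>f a.
      (\<Sum>n. real (n + 1) * a (X (n + 1)) * pd (X (Suc p + n + 1)) f a)
      + TpartP T k (Suc p) f a + TpartP TB m (Suc p) f a)"

end

theory Submission
  imports Defs
begin

text \<open>A function in the domain depends on only finitely many variables, so on it all the
  infinite sums in D_p are finite, and D_p splits into a t-part, a bar t-part and an x-part. Each
  part is a differential operator of order at most two with polynomial coefficients. Its
  commutator with d/dv therefore only differentiates the coefficients, and its commutator with
  multiplication by a variable w only removes one derivative d/dw (using the symmetry of second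
  derivatives); each resulting sum has a single surviving term. The leftover terms are
  multiplications by coordinates x_j with j \<ge> 1, which belong to F. The bar t-identities are the
  t-identities with the roles of the two families exchanged.\<close>

section \<open>Partial derivatives\<close>

lemma mixed_differences_mvt:
  fixes g gx gy gxy gyx :: "real \<Rightarrow> real \<Rightarrow> real"
  assumes dx: "\<And>x y. ((\<lambda>x. g x y) has_real_derivative gx x y) (at x)"
    and dy: "\<And>x y. ((\<lambda>y. g x y) has_real_derivative gy x y) (at y)"
    and dxy: "\<And>x y. ((\<lambda>y. gx x y) has_real_derivative gxy x y) (at y)"
    and dyx: "\<And>x y. ((\<lambda>x. gy x y) has_real_derivative gyx x y) (at x)"
    and "h > 0"
  obtains \<xi> \<eta> \<xi>' \<eta>'
  where "\<bar>\<xi> - x0\<bar> < h" "\<bar>\<eta> - y0\<bar> < h" "\<bar>\<xi>' - x0\<bar> < h" "\<bar>\<eta>' - y0\<bar> < h"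
    "gxy \<xi> \<eta> = gyx \<xi>' \<eta>'"
proof -
  \<comment> \<open>Both iterated mean value theorems compute the same second difference
    g(x0+h,y0+h) - g(x0+h,y0) - g(x0,y0+h) + g(x0,y0).\<close>
  have "\<exists>z. x0 < z \<and> z < x0 + h \<and> (\<lambda>s. g s (y0+h) - g s y0) (x0+h) - (\<lambda>s. g s (y0+h) - g s y0) x0
      = (x0 + h - x0) * (gx z (y0+h) - gx z y0)"
    using \<open>h > 0\<close> by (intro MVT2) (auto intro!: derivative_eq_intros dx)
  then obtain \<xi> where \<xi>: "x0 < \<xi>" "\<xi> < x0 + h"
    "g (x0+h) (y0+h) - g (x0+h) y0 - (g x0 (y0+h) - g x0 y0) = h * (gx \<xi> (y0+h) - gx \<xi> y0)"
    by auto
  have "\<exists>z. y0 < z \<and> z < y0 + h \<and> gx \<xi> (y0+h) - gx \<xi> y0 = (y0 + h - y0) * gxy \<xi> z"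
    using \<open>h > 0\<close> by (intro MVT2) (auto intro!: dxy)
  then obtain \<eta> where \<eta>: "y0 < \<eta>" "\<eta> < y0 + h" "gx \<xi> (y0+h) - gx \<xi> y0 = h * gxy \<xi> \<eta>"
    by auto
  have "\<exists>z. y0 < z \<and> z < y0 + h \<and> (\<lambda>t. g (x0+h) t - g x0 t) (y0+h) - (\<lambda>t. g (x0+h) t - g x0 t) y0
      = (y0 + h - y0) * (gy (x0+h) z - gy x0 z)"
    using \<open>h > 0\<close> by (intro MVT2) (auto intro!: derivative_eq_intros dy)
  then obtain \<eta>' where \<eta>': "y0 < \<eta>'" "\<eta>' < y0 + h"
    "g (x0+h) (y0+h) - g x0 (y0+h) - (g (x0+h) y0 - g x0 y0) = h * (gy (x0+h) \<eta>' - gy x0 \<eta>')"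
    by auto
  have "\<exists>z. x0 < z \<and> z < x0 + h \<and> gy (x0+h) \<eta>' - gy x0 \<eta>' = (x0 + h - x0) * gyx z \<eta>'"
    using \<open>h > 0\<close> by (intro MVT2) (auto intro!: dyx)
  then obtain \<xi>' where \<xi>': "x0 < \<xi>'" "\<xi>' < x0 + h" "gy (x0+h) \<eta>' - gy x0 \<eta>' = h * gyx \<xi>' \<eta>'"
    by auto
  have "h * (h * gxy \<xi> \<eta>) = h * (h * gyx \<xi>' \<eta>')"
    using \<xi>(3) \<eta>(3) \<eta>'(3) \<xi>'(3) by (simp add: algebra_simps)
  then have "gxy \<xi> \<eta> = gyx \<xi>' \<eta>'"
    using \<open>h > 0\<close> by simp
  with \<xi> \<eta> \<xi>' \<eta>' show thesis
    by (intro that[of \<xi> \<eta> \<xi>' \<eta>']) auto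
qed

lemma mixed_partials_symmetric:
  fixes g gx gy gxy gyx :: "real \<Rightarrow> real \<Rightarrow> real"
  assumes dx: "\<And>x y. ((\<lambda>x. g x y) has_real_derivative gx x y) (at x)"
    and dy: "\<And>x y. ((\<lambda>y. g x y) has_real_derivative gy x y) (at y)"
    and dxy: "\<And>x y. ((\<lambda>y. gx x y) has_real_derivative gxy x y) (at y)"
    and dyx: "\<And>x y. ((\<lambda>x. gy x y) has_real_derivative gyx x y) (at x)"
    and c1: "continuous_on UNIV (\<lambda>z. gxy (fst z) (snd z))"
    and c2: "continuous_on UNIV (\<lambda>z. gyx (fst z) (snd z))"
  shows "gxy x0 y0 = gyx x0 y0"
proof (rule ccontr)
  assume ne: "gxy x0 y0 \<noteq> gyx x0 y0"
  define e where "e = \<bar>gxy x0 y0 - gyx x0 y0\<bar> / 2"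
  have e: "e > 0"
    using ne by (simp add: e_def)
  obtain d1 where d1: "d1 > 0" "\<And>z. dist z (x0, y0) < d1 \<Longrightarrow> dist (gxy (fst z) (snd z)) (gxy x0 y0) < e"
    using c1 e unfolding continuous_on_iff by (metis UNIV_I fst_conv snd_conv)
  obtain d2 where d2: "d2 > 0" "\<And>z. dist z (x0, y0) < d2 \<Longrightarrow> dist (gyx (fst z) (snd z)) (gyx x0 y0) < e"
    using c2 e unfolding continuous_on_iff by (metis UNIV_I fst_conv snd_conv)
  define h where "h = min d1 d2 / 2"
  have "h > 0"
    using d1 d2 by (simp add: h_def)
  then obtain \<xi> \<eta> \<xi>' \<eta>'
    where pts: "\<bar>\<xi> - x0\<bar> < h" "\<bar>\<eta> - y0\<bar> < h" "\<bar>\<xi>' - x0\<bar> < h" "\<bar>\<eta>' - y0\<bar> < h"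
      "gxy \<xi> \<eta> = gyx \<xi>' \<eta>'"
    using mixed_differences_mvt[OF dx dy dxy dyx] by metis
  have close: "dist (a, b) (x0, y0) < min d1 d2" if "\<bar>a - x0\<bar> < h" "\<bar>b - y0\<bar> < h" for a b
  proof -
    have "dist (a, b) (x0, y0) = sqrt ((a - x0)\<^sup>2 + (b - y0)\<^sup>2)"
      by (simp add: dist_Pair_Pair dist_real_def)
    also have "\<dots> \<le> \<bar>a - x0\<bar> + \<bar>b - y0\<bar>"
      by (rule sqrt_sum_squares_le_sum_abs)
    also have "\<dots> < min d1 d2"
      using that by (simp add: h_def)
    finally show ?thesis .
  qed
  have "dist (gxy \<xi> \<eta>) (gxy x0 y0) < e"
    using d1(2)[of "(\<xi>, \<eta>)"] close[OF pts(1,2)] by simp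
  moreover have "dist (gyx \<xi>' \<eta>') (gyx x0 y0) < e"
    using d2(2)[of "(\<xi>', \<eta>')"] close[OF pts(3,4)] by simp
  ultimately show False
    using pts(5) unfolding dist_real_def e_def by (smt (verit) field_sum_of_halves)
qed

definition coord_differentiable :: "fn \<Rightarrow> bool" where
  "coord_differentiable g \<longleftrightarrow> (\<forall>v a. (\<lambda>h. g (a(v := h))) differentiable (at (a v)))"

lemma has_real_derivative_pd:
  "coord_differentiable g \<Longrightarrow> ((\<lambda>h. g (a(v := h))) has_real_derivative pd v g a) (at (a v))"
  unfolding coord_differentiable_def pd_def using DERIV_deriv_iff_real_differentiable by blast

lemma has_real_derivative_pd_at:
  "coord_differentiable g \<Longrightarrow> ((\<lambda>h. g (a(v := h))) has_real_derivative pd v g (a(v := x))) (at x)"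
  using has_real_derivative_pd[of g "a(v := x)" v] by simp

lemma pd_eqI:
  "(\<And>a. ((\<lambda>h. g (a(v := h))) has_real_derivative D a) (at (a v))) \<Longrightarrow> pd v g = D"
  unfolding pd_def by (rule ext) (rule DERIV_imp_deriv)

lemma coord_differentiableI:
  "(\<And>v a. ((\<lambda>h. g (a(v := h))) has_real_derivative D v a) (at (a v))) \<Longrightarrow> coord_differentiable g"
  unfolding coord_differentiable_def using real_differentiable_def by blast

lemma pd_add:
  "coord_differentiable g \<Longrightarrow> coord_differentiable h \<Longrightarrow>
    pd v (\<lambda>a. g a + h a) = (\<lambda>a. pd v g a + pd v h a)"
  by (rule pd_eqI) (auto intro!: derivative_eq_intros has_real_derivative_pd)

lemma pd_mult:
  "coord_differentiable g \<Longrightarrow> coord_differentiable h \<Longrightarrow>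
    pd v (\<lambda>a. g a * h a) = (\<lambda>a. pd v g a * h a + g a * pd v h a)"
  by (rule pd_eqI) (auto intro!: derivative_eq_intros has_real_derivative_pd)

lemma pd_divide_const:
  "coord_differentiable g \<Longrightarrow> pd v (\<lambda>a. g a / c) = (\<lambda>a. pd v g a / c)"
  by (rule pd_eqI) (rule DERIV_cdivide, erule has_real_derivative_pd)

lemma pd_power2:
  "coord_differentiable g \<Longrightarrow> pd v (\<lambda>a. (g a)\<^sup>2) = (\<lambda>a. 2 * g a * pd v g a)"
  by (rule pd_eqI) (auto intro!: derivative_eq_intros has_real_derivative_pd)

lemma pd_sum:
  "finite A \<Longrightarrow> (\<And>i. i \<in> A \<Longrightarrow> coord_differentiable (g i)) \<Longrightarrow>
    pd v (\<lambda>a. \<Sum>i\<in>A. g i a) = (\<lambda>a. \<Sum>i\<in>A. pd v (g i) a)"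
  by (rule pd_eqI) (auto intro!: derivative_eq_intros has_real_derivative_pd)

lemma pd_const: "pd v (\<lambda>a. c) = (\<lambda>a. 0)"
  by (rule pd_eqI) (auto intro!: derivative_eq_intros)

lemma pd_coord: "pd v (\<lambda>a. a w) = (\<lambda>a. of_bool (w = v))"
  by (rule pd_eqI) (auto intro!: derivative_eq_intros)

lemma coord_differentiable_add:
  "coord_differentiable g \<Longrightarrow> coord_differentiable h \<Longrightarrow> coord_differentiable (\<lambda>a. g a + h a)"
  by (rule coord_differentiableI) (auto intro!: derivative_eq_intros has_real_derivative_pd)

lemma coord_differentiable_mult:
  "coord_differentiable g \<Longrightarrow> coord_differentiable h \<Longrightarrow> coord_differentiable (\<lambda>a. g a * h a)"
  by (rule coord_differentiableI) (auto intro!: derivative_eq_intros has_real_derivative_pd)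

lemma coord_differentiable_divide_const:
  "coord_differentiable g \<Longrightarrow> coord_differentiable (\<lambda>a. g a / c)"
  by (rule coord_differentiableI) (rule DERIV_cdivide, erule has_real_derivative_pd)

lemma coord_differentiable_power2:
  "coord_differentiable g \<Longrightarrow> coord_differentiable (\<lambda>a. (g a)\<^sup>2)"
  by (rule coord_differentiableI) (auto intro!: derivative_eq_intros has_real_derivative_pd)

lemma coord_differentiable_sum:
  "finite A \<Longrightarrow> (\<And>i. i \<in> A \<Longrightarrow> coord_differentiable (g i)) \<Longrightarrow>
    coord_differentiable (\<lambda>a. \<Sum>i\<in>A. g i a)"
  by (rule coord_differentiableI) (auto intro!: derivative_eq_intros has_real_derivative_pd)

lemma coord_differentiable_const: "coord_differentiable (\<lambda>a. c)"
  by (rule coord_differentiableI) (auto intro!: derivative_eq_intros)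

lemma coord_differentiable_coord: "coord_differentiable (\<lambda>a. a w)"
  by (rule coord_differentiableI[of _ "\<lambda>v a. of_bool (w = v)"]) (auto intro!: derivative_eq_intros)

lemma depends_only_pd: "depends_only V f \<Longrightarrow> depends_only V (pd v f)"
  unfolding depends_only_def pd_def
proof (intro allI impI)
  fix a b :: pt
  assume f: "\<forall>a b. (\<forall>v\<in>V. a v = b v) \<longrightarrow> f a = f b" and ab: "\<forall>v\<in>V. a v = b v"
  show "deriv (\<lambda>h. f (a(v := h))) (a v) = deriv (\<lambda>h. f (b(v := h))) (b v)"
  proof (cases "v \<in> V")
    case True
    have "(\<lambda>h. f (a(v := h))) = (\<lambda>h. f (b(v := h)))"
      by (intro ext f[rule_format]) (simp add: ab)
    then show ?thesis
      using True ab by simp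
  next
    case False
    have "(\<lambda>h. f (a(v := h))) = (\<lambda>h. f a)" "(\<lambda>h. f (b(v := h))) = (\<lambda>h. f b)"
      using False by (auto intro!: ext f[rule_format])
    then show ?thesis
      by simp
  qed
qed

lemma pd_eq_0_if_independent: "depends_only V f \<Longrightarrow> v \<notin> V \<Longrightarrow> pd v f = (\<lambda>a. 0)"
proof (rule pd_eqI)
  fix a
  assume "depends_only V f" "v \<notin> V"
  then have "(\<lambda>h. f (a(v := h))) = (\<lambda>h. f a)"
    unfolding depends_only_def by (intro ext) (metis fun_upd_other)
  then show "((\<lambda>h. f (a(v := h))) has_real_derivative 0) (at (a v))"
    by simp
qed

lemma pds_append_single: "pds (vs @ [v]) f = pds vs (pd v f)"
  by (induction vs) auto

lemma Dom_pds:
  "f \<in> Dom \<Longrightarrow>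
    continuous_on UNIV (pds vs f) \<and> (\<forall>v a. (\<lambda>h. pds vs f (a(v := h))) differentiable (at (a v)))"
  unfolding Dom_def by blast

lemma Dom_coord_differentiable: "f \<in> Dom \<Longrightarrow> coord_differentiable f"
  using Dom_pds[of f "[]"] unfolding coord_differentiable_def by simp

lemma Dom_pd: "f \<in> Dom \<Longrightarrow> pd v f \<in> Dom"
  unfolding Dom_def using depends_only_pd by (auto simp: pds_append_single[symmetric])

lemma pd_commute_at:
  assumes f: "f \<in> Dom" and "u \<noteq> v"
  shows "pd u (pd v f) a = pd v (pd u f) a"
proof -
  have D: "coord_differentiable f" "coord_differentiable (pd u f)" "coord_differentiable (pd v f)"
    using f by (auto intro: Dom_coord_differentiable Dom_pd)
  have "continuous_on UNIV (\<lambda>z::real \<times> real. a(u := fst z, v := snd z))"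
  proof (rule continuous_on_coordinatewise_then_product)
    fix i
    show "continuous_on UNIV (\<lambda>z::real \<times> real. (a(u := fst z, v := snd z)) i)"
      by (cases "i = v"; cases "i = u") (auto intro!: continuous_intros)
  qed
  then have cont: "continuous_on UNIV (\<lambda>z::real \<times> real. pd w (pd w' f) (a(u := fst z, v := snd z)))" for w w'
    using continuous_on_compose2[OF Dom_pds[of f "[w, w']", THEN conjunct1]] f by simp
  have "pd v (pd u f) (a(u := a u, v := a v)) = pd u (pd v f) (a(u := a u, v := a v))"
  proof (rule mixed_partials_symmetric[where g = "\<lambda>x y. f (a(u := x, v := y))"
        and gx = "\<lambda>x y. pd u f (a(u := x, v := y))" and gy = "\<lambda>x y. pd v f (a(u := x, v := y))"
        and gxy = "\<lambda>x y. pd v (pd u f) (a(u := x, v := y))"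
        and gyx = "\<lambda>x y. pd u (pd v f) (a(u := x, v := y))"])
    fix x y
    show "((\<lambda>x. f (a(u := x, v := y))) has_real_derivative pd u f (a(u := x, v := y))) (at x)"
      using has_real_derivative_pd_at[OF D(1), of "a(v := y)" u x] \<open>u \<noteq> v\<close> by (simp add: fun_upd_twist)
    show "((\<lambda>y. f (a(u := x, v := y))) has_real_derivative pd v f (a(u := x, v := y))) (at y)"
      using has_real_derivative_pd_at[OF D(1), of "a(u := x)" v y] by simp
    show "((\<lambda>y. pd u f (a(u := x, v := y))) has_real_derivative pd v (pd u f) (a(u := x, v := y))) (at y)"
      using has_real_derivative_pd_at[OF D(2), of "a(u := x)" v y] by simp
    show "((\<lambda>x. pd v f (a(u := x, v := y))) has_real_derivative pd u (pd v f) (a(u := x, v := y))) (at x)"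
      using has_real_derivative_pd_at[OF D(3), of "a(v := y)" u x] \<open>u \<noteq> v\<close> by (simp add: fun_upd_twist)
  qed (use cont in auto)
  then show ?thesis
    by simp
qed

lemma pd_commute: "f \<in> Dom \<Longrightarrow> pd u (pd v f) = pd v (pd u f)"
  by (rule ext, cases "u = v") (auto intro: pd_commute_at)

lemmas pd_rules = pd_add pd_mult pd_divide_const pd_power2 pd_sum pd_const pd_coord
  coord_differentiable_add coord_differentiable_mult
  coord_differentiable_divide_const coord_differentiable_power2 coord_differentiable_sum
  coord_differentiable_const coord_differentiable_coord Dom_coord_differentiable Dom_pd
  finite_lessThan finite_atLeastLessThan

section \<open>Truncation of the operators D_p\<close>

fun var_index :: "var \<Rightarrow> nat" where
  "var_index (X j) = j"
| "var_index (T j) = j"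
| "var_index (TB j) = j"

definition supported_below :: "nat \<Rightarrow> fn \<Rightarrow> bool" where
  "supported_below N g \<longleftrightarrow> depends_only {v. var_index v < N} g"

lemma supported_below_pd: "supported_below N g \<Longrightarrow> supported_below N (pd v g)"
  unfolding supported_below_def by (rule depends_only_pd)

lemma supported_below_mult_coord:
  "supported_below N g \<Longrightarrow> var_index w < N \<Longrightarrow> supported_below N (\<lambda>a. a w * g a)"
  unfolding supported_below_def depends_only_def by simp

lemma pd_eq_0_if_supported_below: "supported_below N g \<Longrightarrow> N \<le> var_index v \<Longrightarrow> pd v g = (\<lambda>a. 0)"
  unfolding supported_below_def by (erule pd_eq_0_if_independent) simp

lemma Dom_supported_below:
  assumes "f \<in> Dom"
  obtains N where "M \<le> N" "supported_below N f"
proof -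
  obtain V where V: "finite V" "depends_only V f"
    using assms unfolding Dom_def by blast
  have "V \<subseteq> {v. var_index v < max M (Suc (Max (var_index ` V)))}"
    using V(1) by (auto simp: less_max_iff_disj le_imp_less_Suc)
  then show thesis
    using V(2) that[of "max M (Suc (Max (var_index ` V)))"]
    unfolding supported_below_def depends_only_def
    by (metis (mono_tags) max.cobounded1 mem_Collect_eq subsetD)
qed

definition Tpart0_trunc :: "(nat \<Rightarrow> var) \<Rightarrow> nat \<Rightarrow> nat \<Rightarrow> oper" where
  "Tpart0_trunc tv kk N = (\<lambda>f a.
     1 / real kk * (\<Sum>n<N. a (X (n + 2)) * pd (tv ((n + 1) * kk)) f a
                       + real (n + 1 + kk) * a (tv (n + 1 + kk)) * pd (tv (n + 1)) f a)
     + 1 / (2 * real kk) * (\<Sum>n = 1..<kk. real n * a (tv n) * real (kk - n) * a (tv (kk - n))) * f a)"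

definition Tpart1_trunc :: "(nat \<Rightarrow> var) \<Rightarrow> nat \<Rightarrow> nat \<Rightarrow> oper" where
  "Tpart1_trunc tv kk N = (\<lambda>f a.
     1 / real kk * (\<Sum>n<N. a (X (n + 1)) * pd (tv ((n + 1) * kk)) f a
                       + real (n + 1) * a (tv (n + 1)) * pd (tv (n + 1)) f a))"

definition TpartP_trunc :: "(nat \<Rightarrow> var) \<Rightarrow> nat \<Rightarrow> nat \<Rightarrow> nat \<Rightarrow> oper" where
  "TpartP_trunc tv kk p N = (\<lambda>f a.
     1 / real kk * (\<Sum>n<N. a (X n) * pd (tv ((p + n) * kk)) f a
                       + real n * a (tv n) * pd (tv (p * kk + n)) f a)
     + 1 / (2 * real kk) * (\<Sum>n = 1..<p * kk. pd (tv n) (pd (tv (p * kk - n)) f) a))"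

definition x_part :: "nat \<Rightarrow> nat \<Rightarrow> oper" where
  "x_part N p = (\<lambda>f a. \<Sum>n<N. real (n + 1) * a (X (n + 1)) * pd (X (n + p)) f a)"

text \<open>The multiplicative terms of D_0 and D_1 are distributed between the two families.\<close>

definition family_part :: "(nat \<Rightarrow> var) \<Rightarrow> nat \<Rightarrow> nat \<Rightarrow> nat \<Rightarrow> oper" where
  "family_part tv kk N p = (case p of
      0 \<Rightarrow> (\<lambda>f a. Tpart0_trunc tv kk N f a + (a (X 0) * a (X 1) / real kk + a (X 0) * a (tv kk)) * f a)
    | Suc 0 \<Rightarrow> (\<lambda>f a. Tpart1_trunc tv kk N f a + (a (X 0))\<^sup>2 / (2 * real kk) * f a)
    | Suc (Suc q) \<Rightarrow> TpartP_trunc tv kk (Suc q) N)"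

context
  fixes tv :: "nat \<Rightarrow> var" and kk N :: nat and g :: fn
  assumes g: "supported_below N g" and kk: "0 < kk" and index: "\<And>j. var_index (tv j) = j"
begin

lemma Tpart0_eq_trunc: "Tpart0 tv kk g a = Tpart0_trunc tv kk N g a"
proof -
  have "N \<le> (n + 1) * kk" if "N \<le> n" for n
    using that mult_le_mono2[of 1 kk "n + 1"] kk by simp
  then show ?thesis
    unfolding Tpart0_def Tpart0_trunc_def
    by (subst suminf_finite[of "{..<N}"]) (auto simp: index pd_eq_0_if_supported_below[OF g])
qed

lemma Tpart1_eq_trunc: "Tpart1 tv kk g a = Tpart1_trunc tv kk N g a"
proof -
  have "N \<le> (n + 1) * kk" if "N \<le> n" for n
    using that mult_le_mono2[of 1 kk "n + 1"] kk by simp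
  then show ?thesis
    unfolding Tpart1_def Tpart1_trunc_def
    by (subst suminf_finite[of "{..<N}"]) (auto simp: index pd_eq_0_if_supported_below[OF g])
qed

lemma TpartP_eq_trunc: "TpartP tv kk p g a = TpartP_trunc tv kk p N g a"
proof -
  have "N \<le> (p + n) * kk" if "N \<le> n" for n
    using that kk by (metis le_add2 le_trans mult_1_right mult_le_mono2 Suc_leI One_nat_def)
  then show ?thesis
    unfolding TpartP_def TpartP_trunc_def
    by (subst suminf_finite[of "{..<N}"]) (auto simp: index pd_eq_0_if_supported_below[OF g])
qed

end

lemma x_sum_eq_x_part:
  assumes "supported_below N g"
  shows "(\<Sum>n. real (n + 1) * a (X (n + 1)) * pd (X (n + p)) g a) = x_part N p g a"
  unfolding x_part_def by (rule suminf_finite) (auto simp: pd_eq_0_if_supported_below[OF assms])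

lemma Dop_eq_parts:
  assumes g: "supported_below N g" and "0 < k" "0 < m"
  shows "Dop k m p g a = family_part T k N p g a + family_part TB m N p g a + x_part N p g a"
proof -
  note trunc = Tpart0_eq_trunc[OF g] Tpart1_eq_trunc[OF g] TpartP_eq_trunc[OF g]
  consider "p = 0" | "p = 1" | q where "p = Suc (Suc q)"
    by (metis One_nat_def not0_implies_Suc)
  then show ?thesis
  proof cases
    case 1
    then show ?thesis
      using x_sum_eq_x_part[OF g, of a 0] trunc[of k] trunc[of m] assms
      by (simp add: family_part_def algebra_simps add_divide_distrib)
  next
    case 2
    then show ?thesis
      using x_sum_eq_x_part[OF g, of a 1] trunc[of k] trunc[of m] assms
      by (simp add: family_part_def algebra_simps add_divide_distrib power2_eq_square)
  next
    case 3
    then show ?thesis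
      using x_sum_eq_x_part[OF g, of a p] trunc[of k] trunc[of m] assms
      by (simp add: family_part_def ac_simps)
  qed
qed

section \<open>Commutators of the parts of D_p\<close>

lemma sum_eq_single:
  assumes "finite A" "\<And>n. n \<in> A \<Longrightarrow> n \<noteq> i \<Longrightarrow> G n = 0"
  shows "sum G A = (if i \<in> A then G i else 0)"
proof -
  have "sum G A = sum (\<lambda>n. if n = i then G n else 0) A"
    by (rule sum.cong) (auto simp: assms)
  then show ?thesis
    using assms(1) by simp
qed

lemma sum_of_bool_multiple:
  fixes kk n s :: nat and G :: "nat \<Rightarrow> real"
  assumes "0 < kk"
  shows "(\<Sum>j<N. G j * of_bool (n = (j + s) * kk))
    = (if kk dvd n \<and> s \<le> n div kk \<and> n div kk - s < N then G (n div kk - s) else 0)"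
proof (cases "kk dvd n \<and> s \<le> n div kk")
  case True
  then obtain c where c: "n = c * kk" "s \<le> c"
    using assms by (auto elim!: dvdE simp: mult.commute)
  have "n = (j + s) * kk \<longleftrightarrow> j = c - s" for j
    unfolding c(1) using c(2) assms by auto
  then have "(\<Sum>j<N. G j * of_bool (n = (j + s) * kk)) = (\<Sum>j<N. G j * of_bool (j = c - s))"
    by presburger
  also have "\<dots> = (if c - s < N then G (c - s) else 0)"
    by (subst sum_eq_single[where i = "c - s"]) auto
  finally show ?thesis
    using True assms c by simp
next
  case False
  have "n \<noteq> (j + s) * kk" for j
  proof
    assume "n = (j + s) * kk"
    then have "kk dvd n" "n div kk = j + s"
      using assms by simp_all
    then show False
      using False by simp
  qed
  then show ?thesis
    using False by auto
qed

context
  fixes f :: fn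
  assumes f: "f \<in> Dom"
begin

lemma pd_Tpart0_trunc:
  "pd v (Tpart0_trunc tv kk N f) a = Tpart0_trunc tv kk N (pd v f) a
     + 1 / real kk * (\<Sum>n<N. of_bool (X (n + 2) = v) * pd (tv ((n + 1) * kk)) f a
         + real (n + 1 + kk) * of_bool (tv (n + 1 + kk) = v) * pd (tv (n + 1)) f a)
     + 1 / (2 * real kk) * (\<Sum>n = 1..<kk. real n * of_bool (tv n = v) * real (kk - n) * a (tv (kk - n))
         + real n * a (tv n) * real (kk - n) * of_bool (tv (kk - n) = v)) * f a"
  unfolding Tpart0_trunc_def
  by (simp only: pd_rules f pd_commute[OF f]) (simp add: sum.distrib algebra_simps)

lemma pd_Tpart1_trunc:
  "pd v (Tpart1_trunc tv kk N f) a = Tpart1_trunc tv kk N (pd v f) a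
     + 1 / real kk * (\<Sum>n<N. of_bool (X (n + 1) = v) * pd (tv ((n + 1) * kk)) f a
         + real (n + 1) * of_bool (tv (n + 1) = v) * pd (tv (n + 1)) f a)"
  unfolding Tpart1_trunc_def
  by (simp only: pd_rules f pd_commute[OF f]) (simp add: sum.distrib algebra_simps)

lemma pd_TpartP_trunc:
  "pd v (TpartP_trunc tv kk P N f) a = TpartP_trunc tv kk P N (pd v f) a
     + 1 / real kk * (\<Sum>n<N. of_bool (X n = v) * pd (tv ((P + n) * kk)) f a
         + real n * of_bool (tv n = v) * pd (tv (P * kk + n)) f a)"
proof -
  have "pd u (pd v g) = pd v (pd u g)" if "g \<in> Dom" for u g
    using pd_commute[OF that] .
  then show ?thesis
    unfolding TpartP_trunc_def
    by (simp only: pd_rules f) (simp add: sum.distrib algebra_simps)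
qed

lemma pd_x_part:
  "pd v (x_part N p f) a = x_part N p (pd v f) a
     + (\<Sum>n<N. real (n + 1) * of_bool (X (n + 1) = v) * pd (X (n + p)) f a)"
  unfolding x_part_def
  by (simp only: pd_rules f pd_commute[OF f]) (simp add: sum.distrib algebra_simps)

lemma Tpart0_trunc_mult:
  "Tpart0_trunc tv kk N (\<lambda>a. a w * f a) a = a w * Tpart0_trunc tv kk N f a
     + 1 / real kk * (\<Sum>n<N. a (X (n + 2)) * of_bool (w = tv ((n + 1) * kk))
         + real (n + 1 + kk) * a (tv (n + 1 + kk)) * of_bool (w = tv (n + 1))) * f a"
  unfolding Tpart0_trunc_def
  by (simp only: pd_rules f)
    (cases "kk = 0";
      simp add: sum.distrib algebra_simps sum_distrib_left sum_distrib_right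
        del: sum_mult_of_bool_eq sum_of_bool_mult_eq)

lemma Tpart1_trunc_mult:
  "Tpart1_trunc tv kk N (\<lambda>a. a w * f a) a = a w * Tpart1_trunc tv kk N f a
     + 1 / real kk * (\<Sum>n<N. a (X (n + 1)) * of_bool (w = tv ((n + 1) * kk))
         + real (n + 1) * a (tv (n + 1)) * of_bool (w = tv (n + 1))) * f a"
  unfolding Tpart1_trunc_def
  by (simp only: pd_rules f)
    (simp add: sum.distrib algebra_simps sum_distrib_left sum_distrib_right del: sum_mult_of_bool_eq)

lemma TpartP_trunc_mult:
  "TpartP_trunc tv kk P N (\<lambda>a. a w * f a) a = a w * TpartP_trunc tv kk P N f a
     + 1 / real kk * (\<Sum>n<N. a (X n) * of_bool (w = tv ((P + n) * kk))
         + real n * a (tv n) * of_bool (w = tv (P * kk + n))) * f a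
     + 1 / (2 * real kk) * (\<Sum>n = 1..<P * kk. of_bool (w = tv (P * kk - n)) * pd (tv n) f a
         + of_bool (w = tv n) * pd (tv (P * kk - n)) f a)"
  unfolding TpartP_trunc_def
  by (simp only: pd_rules f)
    (simp add: sum.distrib algebra_simps sum_distrib_left sum_distrib_right del: sum_mult_of_bool_eq)

lemma x_part_mult:
  "x_part N p (\<lambda>a. a w * f a) a = a w * x_part N p f a
     + (\<Sum>n<N. real (n + 1) * a (X (n + 1)) * of_bool (w = X (n + p))) * f a"
  unfolding x_part_def
  by (simp only: pd_rules f)
    (simp add: sum.distrib algebra_simps sum_distrib_left sum_distrib_right del: sum_mult_of_bool_eq)

lemma coord_differentiable_Tpart_trunc:
  "coord_differentiable (Tpart0_trunc tv kk N f)"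
  "coord_differentiable (Tpart1_trunc tv kk N f)"
  "coord_differentiable (TpartP_trunc tv kk P N f)"
  unfolding Tpart0_trunc_def Tpart1_trunc_def TpartP_trunc_def by (simp_all only: pd_rules f)

lemma coord_differentiable_family_part: "coord_differentiable (family_part tv kk N p f)"
  using coord_differentiable_Tpart_trunc
  by (cases p rule: nat.exhaust[case_product nat.exhaust[of "p - 1"]])
    (auto simp: family_part_def pd_rules f)

lemma coord_differentiable_x_part: "coord_differentiable (x_part N p f)"
  unfolding x_part_def by (simp only: pd_rules f)

lemma pd_family_part_other:
  assumes "v \<notin> range tv" "v \<notin> range X"
  shows "pd v (family_part tv kk N p f) a = family_part tv kk N p (pd v f) a"
proof -
  have ne: "tv j \<noteq> v" "X j \<noteq> v" for j
    using assms by auto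
  consider "p = 0" | "p = 1" | P where "p = Suc (Suc P)"
    by (metis One_nat_def not0_implies_Suc)
  then show ?thesis
    by cases (simp_all add: family_part_def pd_rules f coord_differentiable_Tpart_trunc
        pd_Tpart0_trunc pd_Tpart1_trunc pd_TpartP_trunc ne)
qed

lemma family_part_mult_other:
  assumes "w \<notin> range tv"
  shows "family_part tv kk N p (\<lambda>a. a w * f a) a = a w * family_part tv kk N p f a"
proof -
  have ne: "w \<noteq> tv j" for j
    using assms by auto
  consider "p = 0" | "p = 1" | P where "p = Suc (Suc P)"
    by (metis One_nat_def not0_implies_Suc)
  then show ?thesis
    by cases (simp_all add: family_part_def Tpart0_trunc_mult Tpart1_trunc_mult TpartP_trunc_mult
        algebra_simps ne)
qed

lemma pd_x_part_other:
  assumes "v \<notin> range X"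
  shows "pd v (x_part N p f) a = x_part N p (pd v f) a"
proof -
  have "X j \<noteq> v" for j
    using assms by auto
  then show ?thesis
    by (simp add: pd_x_part)
qed

lemma x_part_mult_other:
  assumes "w \<notin> range X"
  shows "x_part N p (\<lambda>a. a w * f a) a = a w * x_part N p f a"
proof -
  have "w \<noteq> X j" for j
    using assms by auto
  then show ?thesis
    by (simp add: x_part_mult)
qed

lemma pd_X_x_part:
  assumes "q < N"
  shows "pd (X q) (x_part N p f) a = x_part N p (pd (X q) f) a + real q * pd (X (p + q - 1)) f a"
proof -
  have "(\<Sum>j<N. real (j + 1) * of_bool (X (j + 1) = X q) * pd (X (j + p)) f a) = real q * pd (X (p + q - 1)) f a"
    using assms by (subst sum_eq_single[where i = "q - 1"]) (auto simp: add.commute)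
  then show ?thesis
    by (simp add: pd_x_part)
qed

lemma x_part_mult_X:
  assumes "q < N"
  shows "x_part N p (\<lambda>a. a (X q) * f a) a = a (X q) * x_part N p f a
    + real (q + 1 - p) * a (X (q + 1 - p)) * f a"
proof -
  have "(\<Sum>j<N. real (j + 1) * a (X (j + 1)) * of_bool (X q = X (j + p))) = real (q + 1 - p) * a (X (q + 1 - p))"
  proof (cases "p \<le> q")
    case True
    then show ?thesis
      using assms by (subst sum_eq_single[where i = "q - p"]) (auto simp: Suc_diff_le)
  qed (auto intro!: sum.neutral)
  then show ?thesis
    by (simp add: x_part_mult del: sum_mult_of_bool_eq)
qed

end

text \<open>Commuting D_p with t_n turns its terms x_j d/dt_{(p+j-1)k} into multiplication by this
  function of x. The guard p \<le> n div k keeps out x_0 = s, which is not periodic.\<close>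

definition x_coeff :: "nat \<Rightarrow> nat \<Rightarrow> nat \<Rightarrow> pt \<Rightarrow> real" where
  "x_coeff kk n p a = (if kk dvd n \<and> p \<le> n div kk then a (X (n div kk + 1 - p)) / real kk else 0)"

locale variable_family =
  fixes tv :: "nat \<Rightarrow> var"
  assumes family_eq_iff [simp]: "tv i = tv j \<longleftrightarrow> i = j"
    and family_neq_X [simp]: "tv i \<noteq> X j"
begin

lemma X_neq_family [simp]: "X j \<noteq> tv i"
  using family_neq_X by metis

context
  fixes f :: fn
  assumes f: "f \<in> Dom"
begin

lemma pd_family_Tpart0_trunc:
  assumes "n < N"
  shows "pd (tv n) (Tpart0_trunc tv kk N f) a = Tpart0_trunc tv kk N (pd (tv n) f) a
     + (if kk < n then real n / real kk * pd (tv (n - kk)) f a else 0)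
     + (if 0 < n \<and> n < kk then real n * real (kk - n) / real kk * a (tv (kk - n)) * f a else 0)"
proof -
  have lowering: "(\<Sum>j<N. of_bool (X (j + 2) = tv n) * pd (tv ((j + 1) * kk)) f a
        + real (j + 1 + kk) * of_bool (tv (j + 1 + kk) = tv n) * pd (tv (j + 1)) f a)
      = (if kk < n then real n * pd (tv (n - kk)) f a else 0)"
  proof (cases "kk < n")
    case True
    then show ?thesis
      using \<open>n < N\<close> by (subst sum_eq_single[where i = "n - kk - 1"]) (auto simp: Suc_diff_Suc)
  qed (auto intro!: sum.neutral)
  have quadratic: "(\<Sum>j = 1..<kk. real j * of_bool (tv j = tv n) * real (kk - j) * a (tv (kk - j))
        + real j * a (tv j) * real (kk - j) * of_bool (tv (kk - j) = tv n))
      = (if 0 < n \<and> n < kk then 2 * (real n * real (kk - n) * a (tv (kk - n))) else 0)"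
    unfolding sum.distrib
    by (subst (1 2) sum_eq_single[where i = n and A = "{1..<kk}"] sum_eq_single[where i = "kk - n"])
      auto
  show ?thesis
    unfolding pd_Tpart0_trunc[OF f] lowering quadratic by auto
qed

lemma pd_family_Tpart1_trunc:
  assumes "0 < n" "n \<le> N"
  shows "pd (tv n) (Tpart1_trunc tv kk N f) a = Tpart1_trunc tv kk N (pd (tv n) f) a
     + real n / real kk * pd (tv n) f a"
proof -
  have "(\<Sum>j<N. of_bool (X (j + 1) = tv n) * pd (tv ((j + 1) * kk)) f a
        + real (j + 1) * of_bool (tv (j + 1) = tv n) * pd (tv (j + 1)) f a) = real n * pd (tv n) f a"
    using assms by (subst sum_eq_single[where i = "n - 1"]) auto
  then show ?thesis
    unfolding pd_Tpart1_trunc[OF f] by simp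
qed

lemma pd_family_TpartP_trunc:
  assumes "n < N"
  shows "pd (tv n) (TpartP_trunc tv kk P N f) a = TpartP_trunc tv kk P N (pd (tv n) f) a
     + real n / real kk * pd (tv (P * kk + n)) f a"
proof -
  have "(\<Sum>j<N. of_bool (X j = tv n) * pd (tv ((P + j) * kk)) f a
        + real j * of_bool (tv j = tv n) * pd (tv (P * kk + j)) f a) = real n * pd (tv (P * kk + n)) f a"
    using assms by (subst sum_eq_single[where i = n]) auto
  then show ?thesis
    unfolding pd_TpartP_trunc[OF f] by simp
qed

lemma pd_X_Tpart0_trunc:
  assumes "q < N"
  shows "pd (X q) (Tpart0_trunc tv kk N f) a = Tpart0_trunc tv kk N (pd (X q) f) a
     + (if 2 \<le> q then pd (tv ((q - 1) * kk)) f a / real kk else 0)"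
proof -
  have "(\<Sum>j<N. of_bool (X (j + 2) = X q) * pd (tv ((j + 1) * kk)) f a
        + real (j + 1 + kk) * of_bool (tv (j + 1 + kk) = X q) * pd (tv (j + 1)) f a)
      = (if 2 \<le> q then pd (tv ((q - 1) * kk)) f a else 0)"
    using assms by (subst sum_eq_single[where i = "q - 2"]) (auto simp: Suc_diff_Suc numeral_2_eq_2)
  then show ?thesis
    unfolding pd_Tpart0_trunc[OF f] by simp
qed

lemma pd_X_Tpart1_trunc:
  assumes "q < N"
  shows "pd (X q) (Tpart1_trunc tv kk N f) a = Tpart1_trunc tv kk N (pd (X q) f) a
     + (if 0 < q then pd (tv (q * kk)) f a / real kk else 0)"
proof -
  have "(\<Sum>j<N. of_bool (X (j + 1) = X q) * pd (tv ((j + 1) * kk)) f a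
        + real (j + 1) * of_bool (tv (j + 1) = X q) * pd (tv (j + 1)) f a)
      = (if 0 < q then pd (tv (q * kk)) f a else 0)"
    using assms by (subst sum_eq_single[where i = "q - 1"]) auto
  then show ?thesis
    unfolding pd_Tpart1_trunc[OF f] by simp
qed

lemma pd_X_TpartP_trunc:
  assumes "q < N"
  shows "pd (X q) (TpartP_trunc tv kk P N f) a = TpartP_trunc tv kk P N (pd (X q) f) a
     + pd (tv ((P + q) * kk)) f a / real kk"
proof -
  have "(\<Sum>j<N. of_bool (X j = X q) * pd (tv ((P + j) * kk)) f a
        + real j * of_bool (tv j = X q) * pd (tv (P * kk + j)) f a) = pd (tv ((P + q) * kk)) f a"
    using assms by (subst sum_eq_single[where i = q]) auto
  then show ?thesis
    unfolding pd_TpartP_trunc[OF f] by simp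
qed

context
  fixes kk N n :: nat
  assumes kk: "0 < kk" and n: "0 < n" "n \<le> N"
begin

lemma multiple_quotient: "kk dvd n \<Longrightarrow> 0 < n div kk \<and> n div kk \<le> N"
  using n kk by (auto elim!: dvdE intro: le_trans[OF div_le_dividend])

lemma Tpart0_trunc_mult_family:
  "Tpart0_trunc tv kk N (\<lambda>a. a (tv n) * f a) a = a (tv n) * Tpart0_trunc tv kk N f a
     + (x_coeff kk n 0 a + real (n + kk) / real kk * a (tv (n + kk))) * f a"
proof -
  have "(\<Sum>j<N. a (X (j + 2)) * of_bool (n = (j + 1) * kk))
      = (if kk dvd n then a (X (n div kk + 1)) else 0)"
    unfolding sum_of_bool_multiple[OF kk] using multiple_quotient by auto
  moreover have "(\<Sum>j<N. real (j + 1 + kk) * a (tv (j + 1 + kk)) * of_bool (n = j + 1))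
      = real (n + kk) * a (tv (n + kk))"
    using n by (subst sum_eq_single[where i = "n - 1"]) auto
  ultimately have "(\<Sum>j<N. a (X (j + 2)) * of_bool (tv n = tv ((j + 1) * kk))
        + real (j + 1 + kk) * a (tv (j + 1 + kk)) * of_bool (tv n = tv (j + 1)))
      = (if kk dvd n then a (X (n div kk + 1)) else 0) + real (n + kk) * a (tv (n + kk))"
    by (simp only: family_eq_iff sum.distrib)
  then show ?thesis
    unfolding Tpart0_trunc_mult[OF f] x_coeff_def by (simp add: add_divide_distrib algebra_simps)
qed


lemma Tpart1_trunc_mult_family:
  "Tpart1_trunc tv kk N (\<lambda>a. a (tv n) * f a) a = a (tv n) * Tpart1_trunc tv kk N f a
     + (x_coeff kk n 1 a + real n / real kk * a (tv n)) * f a"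
proof -
  have "(\<Sum>j<N. a (X (j + 1)) * of_bool (n = (j + 1) * kk))
      = (if kk dvd n then a (X (n div kk)) else 0)"
    unfolding sum_of_bool_multiple[OF kk] using multiple_quotient by auto
  moreover have "(\<Sum>j<N. real (j + 1) * a (tv (j + 1)) * of_bool (n = j + 1)) = real n * a (tv n)"
    using n by (subst sum_eq_single[where i = "n - 1"]) auto
  ultimately have "(\<Sum>j<N. a (X (j + 1)) * of_bool (tv n = tv ((j + 1) * kk))
        + real (j + 1) * a (tv (j + 1)) * of_bool (tv n = tv (j + 1)))
      = (if kk dvd n then a (X (n div kk)) else 0) + real n * a (tv n)"
    by (simp only: family_eq_iff sum.distrib)
  then show ?thesis
    unfolding Tpart1_trunc_mult[OF f] x_coeff_def
    using multiple_quotient by (cases "kk dvd n") (simp_all add: add_divide_distrib algebra_simps)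
qed

lemma TpartP_trunc_mult_family:
  assumes "0 < P"
  shows "TpartP_trunc tv kk P N (\<lambda>a. a (tv n) * f a) a = a (tv n) * TpartP_trunc tv kk P N f a
     + x_coeff kk n (Suc P) a * f a
     + (if P * kk < n then real (n - P * kk) / real kk * a (tv (n - P * kk)) * f a
        else if n < P * kk then pd (tv (P * kk - n)) f a / real kk
        else a (X 0) / real kk * f a)"
proof -
  have "(\<Sum>j<N. a (X j) * of_bool (n = (j + P) * kk))
      = (if kk dvd n \<and> Suc P \<le> n div kk then a (X (n div kk - P)) else 0)
        + (if n = P * kk then a (X 0) else 0)"
    unfolding sum_of_bool_multiple[OF kk] using multiple_quotient kk assms by (auto elim!: dvdE)
  moreover have "0 < P * kk"
    using kk assms by simp
  then have "n - P * kk < N"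
    using n by linarith
  then have "(\<Sum>j<N. real j * a (tv j) * of_bool (n = P * kk + j))
      = (if P * kk < n then real (n - P * kk) * a (tv (n - P * kk)) else 0)"
    by (subst sum_eq_single[where i = "n - P * kk"]) auto
  moreover have "(\<Sum>j = 1..<P * kk. of_bool (n = P * kk - j) * pd (tv j) f a
        + of_bool (n = j) * pd (tv (P * kk - j)) f a)
      = (if n < P * kk then 2 * pd (tv (P * kk - n)) f a else 0)"
    unfolding sum.distrib using n
    by (subst (1 2) sum_eq_single[where i = "P * kk - n"] sum_eq_single[where i = n]) auto
  ultimately show ?thesis
    unfolding TpartP_trunc_mult[OF f] x_coeff_def
    by (simp add: family_eq_iff sum.distrib ac_simps add_divide_distrib algebra_simps
        del: sum_mult_of_bool_eq sum_of_bool_mult_eq)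
qed
end

lemma pd_family_var_family_part:
  assumes "0 < n" "n < N"
  shows "pd (tv n) (family_part tv kk N p f) a = family_part tv kk N p (pd (tv n) f) a
    + (if p = 0 \<and> n < kk then real n * real (kk - n) / real kk * a (tv (kk - n)) * f a
       else if p = 0 \<and> n = kk then a (X 0) * f a
       else real n / real kk * pd (tv (nat ((int p - 1) * int kk + int n))) f a)"
proof -
  consider "p = 0" | "p = 1" | P where "p = Suc (Suc P)"
    by (metis One_nat_def not0_implies_Suc)
  then show ?thesis
  proof cases
    case 1
    have "nat ((int p - 1) * int kk + int n) = n - kk"
      using 1 by simp
    then show ?thesis
      using 1 assms
      by (auto simp: family_part_def pd_rules f coord_differentiable_Tpart_trunc
          pd_family_Tpart0_trunc algebra_simps)
  next
    case 2
    then show ?thesis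
      using assms by (simp add: family_part_def pd_rules f coord_differentiable_Tpart_trunc
          pd_family_Tpart1_trunc)
  next
    case 3
    have "(int p - 1) * int kk + int n = int (Suc P * kk + n)"
      using 3 by (simp add: algebra_simps)
    then have "nat ((int p - 1) * int kk + int n) = Suc P * kk + n"
      by (metis nat_int)
    then show ?thesis
      using 3 assms by (simp add: family_part_def pd_family_TpartP_trunc)
  qed
qed

lemma pd_X_family_part:
  assumes "q < N"
  shows "pd (X q) (family_part tv kk N p f) a = family_part tv kk N p (pd (X q) f) a
    + (if 1 < p + q then pd (tv ((p + q - 1) * kk)) f a / real kk
       else if p + q = 1 then a (X 0) / real kk * f a
       else (a (X 1) / real kk + a (tv kk)) * f a)"
proof -
  consider "p = 0" | "p = 1" | P where "p = Suc (Suc P)"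
    by (metis One_nat_def not0_implies_Suc)
  then show ?thesis
  proof cases
    case 1
    then show ?thesis
      using assms
      by (auto simp: family_part_def pd_rules f coord_differentiable_Tpart_trunc
          pd_X_Tpart0_trunc algebra_simps add_divide_distrib)
  next
    case 2
    then show ?thesis
      using assms
      by (auto simp: family_part_def pd_rules f coord_differentiable_Tpart_trunc
          pd_X_Tpart1_trunc algebra_simps add_divide_distrib)
  next
    case 3
    then show ?thesis
      using assms by (simp add: family_part_def pd_X_TpartP_trunc algebra_simps)
  qed
qed

lemma family_part_mult_family_var:
  assumes "0 < kk" "0 < n" "n \<le> N"
  shows "family_part tv kk N p (\<lambda>a. a (tv n) * f a) a = a (tv n) * family_part tv kk N p f a
    + x_coeff kk n p a * f a
    + (let d = int n - (int p - 1) * int kk in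
       if 0 < d then real_of_int d / real kk * a (tv (nat d)) * f a
       else if d < 0 then pd (tv (nat (- d))) f a / real kk
       else a (X 0) / real kk * f a)"
proof -
  consider "p = 0" | "p = 1" | P where "p = Suc (Suc P)"
    by (metis One_nat_def not0_implies_Suc)
  then show ?thesis
  proof cases
    case 1
    then have "int n - (int p - 1) * int kk = int (n + kk)"
      by simp
    then show ?thesis
      using 1 assms unfolding Let_def
      by (simp only: nat_int) (simp add: family_part_def Tpart0_trunc_mult_family, simp add: field_simps)
  next
    case 2
    then show ?thesis
      using assms by (simp add: family_part_def Tpart1_trunc_mult_family)
        (simp add: algebra_simps)
  next
    case 3
    define M where "M = Suc P * kk"
    have d: "int n - (int p - 1) * int kk = int n - int M"
      using 3 by (simp add: M_def algebra_simps)
    have "family_part tv kk N p (\<lambda>a. a (tv n) * f a) a = a (tv n) * family_part tv kk N p f a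
      + x_coeff kk n p a * f a
      + (if M < n then real (n - M) / real kk * a (tv (n - M)) * f a
         else if n < M then pd (tv (M - n)) f a / real kk
         else a (X 0) / real kk * f a)"
      using TpartP_trunc_mult_family[OF assms, of "Suc P"] unfolding 3 family_part_def M_def by simp
    moreover have "nat (int n - int M) = n - M" "nat (int M - int n) = M - n"
      by (simp_all add: nat_minus_as_int)
    ultimately show ?thesis
      unfolding d Let_def by (cases "M < n"; cases "n < M") (simp_all add: of_nat_diff)
  qed
qed

end

end

section \<open>The commutator identities\<close>

lemma Fsp_I:
  assumes "\<And>a b. (\<And>j. a (X (Suc j)) = b (X (Suc j))) \<Longrightarrow> g a = g b"
  shows "g \<in> Fsp"
  unfolding Fsp_def depends_only_def
proof (intro CollectI conjI allI impI)
  fix a b :: pt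
  assume "\<forall>v\<in>range X. a v = b v"
  then show "g a = g b"
    by (intro assms) auto
next
  fix a :: pt
  show "g (a(X 0 := a (X 0) + 1)) = g a"
    by (rule assms) simp
qed

lemma zero_in_Fsp: "(\<lambda>a. 0) \<in> Fsp"
  by (rule Fsp_I) simp

lemma const_mult_X_in_Fsp: "(\<lambda>a. c * a (X (Suc j))) \<in> Fsp"
  by (rule Fsp_I) simp

lemma x_coeff_in_Fsp: "x_coeff kk n p \<in> Fsp"
proof (rule Fsp_I)
  fix a b :: pt
  assume "\<And>j. a (X (Suc j)) = b (X (Suc j))"
  then show "x_coeff kk n p a = x_coeff kk n p b"
    unfolding x_coeff_def by (metis Suc_diff_le add.commute plus_1_eq_Suc)
qed

lemma scaled_X_in_Fsp: "(\<lambda>a. real (q + 1 - p) * a (X (q + 1 - p))) \<in> Fsp"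
proof (rule Fsp_I)
  fix a b :: pt
  assume "\<And>j. a (X (Suc j)) = b (X (Suc j))"
  then show "real (q + 1 - p) * a (X (q + 1 - p)) = real (q + 1 - p) * b (X (q + 1 - p))"
    by (cases "q + 1 - p") auto
qed

lemma modF_pointwiseI:
  assumes "g \<in> Fsp"
    and "\<And>f a N. f \<in> Dom \<Longrightarrow> supported_below N f \<Longrightarrow> M < N \<Longrightarrow> A f a = B f a + g a * f a"
  shows "modF A B"
  unfolding modF_def
proof (intro bexI[OF _ assms(1)] ballI allI)
  fix f a
  assume "f \<in> Dom"
  then obtain N where "Suc M \<le> N" "supported_below N f"
    by (rule Dom_supported_below)
  then show "A f a = B f a + g a * f a"
    using assms(2) \<open>f \<in> Dom\<close> by (simp add: Suc_le_eq)
qed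

lemma comm_pdo_Dop:
  assumes f: "f \<in> Dom" and N: "supported_below N f" and "0 < k" "0 < m"
  shows "comm (pdo v) (Dop k m p) f a
    = (pd v (family_part T k N p f) a - family_part T k N p (pd v f) a)
    + (pd v (family_part TB m N p f) a - family_part TB m N p (pd v f) a)
    + (pd v (x_part N p f) a - x_part N p (pd v f) a)"
proof -
  have "Dop k m p f = (\<lambda>a. family_part T k N p f a + family_part TB m N p f a + x_part N p f a)"
    using Dop_eq_parts[OF N assms(3,4)] by (intro ext)
  then show ?thesis
    unfolding comm_def pdo_def Dop_eq_parts[OF supported_below_pd[OF N] assms(3,4)]
    by (simp add: pd_rules coord_differentiable_family_part coord_differentiable_x_part f)
qed

lemma comm_Dop_mulv:
  assumes N: "supported_below N f" "var_index w < N" and "0 < k" "0 < m"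
  shows "comm (Dop k m p) (mulv w) f a
    = (family_part T k N p (\<lambda>a. a w * f a) a - a w * family_part T k N p f a)
    + (family_part TB m N p (\<lambda>a. a w * f a) a - a w * family_part TB m N p f a)
    + (x_part N p (\<lambda>a. a w * f a) a - a w * x_part N p f a)"
  unfolding comm_def mulv_def Dop_eq_parts[OF N(1) assms(3,4)]
    Dop_eq_parts[OF supported_below_mult_coord[OF N] assms(3,4)]
  by (simp add: algebra_simps)

locale family_pair =
  fixes k m kk kk' :: nat and tv tv' :: "nat \<Rightarrow> var"
  assumes pair: "(tv, kk, tv', kk') = (T, k, TB, m) \<or> (tv, kk, tv', kk') = (TB, m, T, k)"
    and k_pos: "0 < k" and m_pos: "0 < m"

sublocale family_pair \<subseteq> variable_family tv
  using pair by unfold_locales auto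

context family_pair
begin

lemma kk_pos: "0 < kk"
  using pair k_pos m_pos by auto

lemma comm_pdo_family_Dop:
  assumes "f \<in> Dom" "supported_below N f"
  shows "comm (pdo (tv n)) (Dop k m p) f a
    = pd (tv n) (family_part tv kk N p f) a - family_part tv kk N p (pd (tv n) f) a"
proof -
  have "tv n \<notin> range tv'" "tv n \<notin> range X"
    using pair by auto
  then show ?thesis
    using pair comm_pdo_Dop[OF assms k_pos m_pos]
    by (auto simp: pd_family_part_other[OF assms(1)] pd_x_part_other[OF assms(1)])
qed

lemma comm_Dop_mulv_family:
  assumes "f \<in> Dom" "supported_below N f" "n < N"
  shows "comm (Dop k m p) (mulv (tv n)) f a
    = family_part tv kk N p (\<lambda>a. a (tv n) * f a) a - a (tv n) * family_part tv kk N p f a"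
proof -
  have "tv n \<notin> range tv'" "tv n \<notin> range X"
    using pair by auto
  then show ?thesis
    using pair comm_Dop_mulv[OF assms(2) _ k_pos m_pos, of "tv n"] assms(3)
    by (auto simp: family_part_mult_other[OF assms(1)] x_part_mult_other[OF assms(1)])
qed

lemma comm_pdo_family_Dop_raising:
  assumes "1 \<le> n" "1 \<le> p \<or> kk < n"
  shows "modF (comm (pdo (tv n)) (Dop k m p))
    (scaleo (real n / real kk) (pdo (tv (nat ((int p - 1) * int kk + int n)))))"
proof (rule modF_pointwiseI[OF zero_in_Fsp, where M = n])
  fix f a N
  assume f: "f \<in> Dom" and N: "supported_below N f" "n < N"
  show "comm (pdo (tv n)) (Dop k m p) f a
    = scaleo (real n / real kk) (pdo (tv (nat ((int p - 1) * int kk + int n)))) f a + 0 * f a"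
    unfolding comm_pdo_family_Dop[OF f N(1)] using pd_family_var_family_part[OF f _ N(2)] assms
    by (auto simp: scaleo_def pdo_def)
qed

lemma comm_pdo_family_Dop0_below:
  assumes "1 \<le> n" "n < kk"
  shows "modF (comm (pdo (tv n)) (Dop k m 0))
    (scaleo (real n / real kk * real (kk - n)) (mulv (tv (kk - n))))"
proof (rule modF_pointwiseI[OF zero_in_Fsp, where M = n])
  fix f a N
  assume f: "f \<in> Dom" and N: "supported_below N f" "n < N"
  show "comm (pdo (tv n)) (Dop k m 0) f a
    = scaleo (real n / real kk * real (kk - n)) (mulv (tv (kk - n))) f a + 0 * f a"
    unfolding comm_pdo_family_Dop[OF f N(1)] using pd_family_var_family_part[OF f _ N(2)] assms
    by (auto simp: scaleo_def mulv_def)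
qed

lemma comm_pdo_family_Dop0_diagonal: "modF (comm (pdo (tv kk)) (Dop k m 0)) (mulv (X 0))"
proof (rule modF_pointwiseI[OF zero_in_Fsp, where M = kk])
  fix f a N
  assume f: "f \<in> Dom" and N: "supported_below N f" "kk < N"
  show "comm (pdo (tv kk)) (Dop k m 0) f a = mulv (X 0) f a + 0 * f a"
    unfolding comm_pdo_family_Dop[OF f N(1)] using pd_family_var_family_part[OF f kk_pos N(2)]
    by (simp add: mulv_def)
qed

lemma comm_Dop_mulv_family_expansion:
  assumes "f \<in> Dom" "supported_below N f" "1 \<le> n" "n < N"
  shows "comm (Dop k m p) (mulv (tv n)) f a = x_coeff kk n p a * f a
    + (let d = int n - (int p - 1) * int kk in
       if 0 < d then real_of_int d / real kk * a (tv (nat d)) * f a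
       else if d < 0 then pd (tv (nat (- d))) f a / real kk
       else a (X 0) / real kk * f a)"
  using assms kk_pos by (simp add: comm_Dop_mulv_family family_part_mult_family_var)

lemma comm_Dop_mulv_family_below:
  assumes "1 \<le> n" "int n < (int p - 1) * int kk"
  shows "modF (comm (Dop k m p) (mulv (tv n)))
    (scaleo (1 / real kk) (pdo (tv (nat ((int p - 1) * int kk - int n)))))"
proof (rule modF_pointwiseI[OF x_coeff_in_Fsp, where M = n])
  fix f a N
  assume f: "f \<in> Dom" and N: "supported_below N f" "n < N"
  show "comm (Dop k m p) (mulv (tv n)) f a
    = scaleo (1 / real kk) (pdo (tv (nat ((int p - 1) * int kk - int n)))) f a + x_coeff kk n p a * f a"
    unfolding comm_Dop_mulv_family_expansion[OF f N(1) assms(1) N(2)]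
    using assms by (simp add: scaleo_def pdo_def Let_def)
qed

lemma comm_Dop_mulv_family_above:
  assumes "1 \<le> n" "int n > (int p - 1) * int kk"
  shows "modF (comm (Dop k m p) (mulv (tv n)))
    (scaleo (real_of_int (int n - (int p - 1) * int kk) / real kk)
      (mulv (tv (nat (int n - (int p - 1) * int kk)))))"
proof (rule modF_pointwiseI[OF x_coeff_in_Fsp, where M = n])
  fix f a N
  assume f: "f \<in> Dom" and N: "supported_below N f" "n < N"
  show "comm (Dop k m p) (mulv (tv n)) f a
    = scaleo (real_of_int (int n - (int p - 1) * int kk) / real kk)
        (mulv (tv (nat (int n - (int p - 1) * int kk)))) f a + x_coeff kk n p a * f a"
    unfolding comm_Dop_mulv_family_expansion[OF f N(1) assms(1) N(2)]
    using assms by (simp add: scaleo_def mulv_def Let_def)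
qed

lemma comm_Dop_mulv_family_diagonal:
  assumes "1 \<le> n" "int n = (int p - 1) * int kk"
  shows "modF (comm (Dop k m p) (mulv (tv n))) (scaleo (1 / real kk) (mulv (X 0)))"
proof (rule modF_pointwiseI[OF x_coeff_in_Fsp, where M = n])
  fix f a N
  assume f: "f \<in> Dom" and N: "supported_below N f" "n < N"
  show "comm (Dop k m p) (mulv (tv n)) f a
    = scaleo (1 / real kk) (mulv (X 0)) f a + x_coeff kk n p a * f a"
    unfolding comm_Dop_mulv_family_expansion[OF f N(1) assms(1) N(2)]
    using assms by (simp add: scaleo_def mulv_def Let_def)
qed

end

interpretation T_family: variable_family T
  by unfold_locales auto

interpretation TB_family: variable_family TB
  by unfold_locales auto

lemma comm_pdo_X_Dop:
  assumes "f \<in> Dom" "supported_below N f" "q < N" "0 < k" "0 < m"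
  shows "comm (pdo (X q)) (Dop k m p) f a
    = (if 1 < p + q then pd (T ((p + q - 1) * k)) f a / real k + pd (TB ((p + q - 1) * m)) f a / real m
       else if p + q = 1 then (1 / real k + 1 / real m) * a (X 0) * f a
       else (a (T k) + a (TB m)) * f a + (1 / real k + 1 / real m) * a (X 1) * f a)
    + real q * pd (X (p + q - 1)) f a"
  using assms
  by (simp add: comm_pdo_Dop T_family.pd_X_family_part TB_family.pd_X_family_part pd_X_x_part
      algebra_simps add_divide_distrib)

lemma comm_pdo_X_Dop_raising:
  assumes "0 < k" "0 < m" "1 < p + q"
  shows "modF (comm (pdo (X q)) (Dop k m p))
    (\<lambda>f a. real q * pd (X (p + q - 1)) f a
      + 1 / real k * pd (T ((p + q - 1) * k)) f a + 1 / real m * pd (TB ((p + q - 1) * m)) f a)"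
proof (rule modF_pointwiseI[OF zero_in_Fsp, where M = q])
  fix f a N
  assume "f \<in> Dom" "supported_below N f" "q < N"
  then show "comm (pdo (X q)) (Dop k m p) f a = real q * pd (X (p + q - 1)) f a
      + 1 / real k * pd (T ((p + q - 1) * k)) f a + 1 / real m * pd (TB ((p + q - 1) * m)) f a + 0 * f a"
    using assms by (simp add: comm_pdo_X_Dop)
qed

lemma comm_pdo_X_Dop_unit:
  assumes "0 < k" "0 < m" "p + q = 1"
  shows "modF (comm (pdo (X q)) (Dop k m p))
    (\<lambda>f a. real q * pd (X 0) f a + (1 / real k + 1 / real m) * a (X 0) * f a)"
proof (rule modF_pointwiseI[OF zero_in_Fsp, where M = q])
  fix f a N
  assume "f \<in> Dom" "supported_below N f" "q < N"
  then show "comm (pdo (X q)) (Dop k m p) f a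
      = real q * pd (X 0) f a + (1 / real k + 1 / real m) * a (X 0) * f a + 0 * f a"
    using assms by (simp add: comm_pdo_X_Dop)
qed

lemma comm_pdo_X0_Dop0:
  assumes "0 < k" "0 < m"
  shows "modF (comm (pdo (X 0)) (Dop k m 0)) (\<lambda>f a. (a (T k) + a (TB m)) * f a)"
proof (rule modF_pointwiseI[OF const_mult_X_in_Fsp[of "1 / real k + 1 / real m" 0], where M = 0])
  fix f a N
  assume "f \<in> Dom" "supported_below N f" "0 < N"
  then show "comm (pdo (X 0)) (Dop k m 0) f a
      = (a (T k) + a (TB m)) * f a + (1 / real k + 1 / real m) * a (X (Suc 0)) * f a"
    using assms by (simp add: comm_pdo_X_Dop del: Dop.simps)
qed

lemma comm_Dop_mulv_X:
  assumes "0 < k" "0 < m"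
  shows "modF (comm (Dop k m p) (mulv (X q))) (\<lambda>f a. 0)"
proof (rule modF_pointwiseI[OF scaled_X_in_Fsp, where M = q])
  fix f a N
  assume f: "f \<in> Dom" and N: "supported_below N f" "q < N"
  have "X q \<notin> range T" "X q \<notin> range TB"
    by auto
  then show "comm (Dop k m p) (mulv (X q)) f a = 0 + real (q + 1 - p) * a (X (q + 1 - p)) * f a"
    using comm_Dop_mulv[OF N(1) _ assms, of "X q"] N(2)
    by (simp add: family_part_mult_other[OF f] x_part_mult_X[OF f])
qed

theorem lemma4p5:
  fixes k m :: nat
  assumes "0 < k" and "0 < m"
  shows
   "(\<forall>n p. 1 \<le> n \<longrightarrow> (1 \<le> p \<or> k < n) \<longrightarrow>
       modF (comm (pdo (T n)) (Dop k m p))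
            (scaleo (real n / real k) (pdo (T (nat ((int p - 1) * int k + int n)))))) \<and>
    (\<forall>n. 1 \<le> n \<longrightarrow> n < k \<longrightarrow>
       modF (comm (pdo (T n)) (Dop k m 0))
            (scaleo (real n / real k * real (k - n)) (mulv (T (k - n))))) \<and>
    modF (comm (pdo (T k)) (Dop k m 0)) (mulv (X 0)) \<and>
    (\<forall>n p. 1 \<le> n \<longrightarrow> int n < (int p - 1) * int k \<longrightarrow>
       modF (comm (Dop k m p) (mulv (T n)))
            (scaleo (1 / real k) (pdo (T (nat ((int p - 1) * int k - int n)))))) \<and>
    (\<forall>n p. 1 \<le> n \<longrightarrow> int n > (int p - 1) * int k \<longrightarrow>
       modF (comm (Dop k m p) (mulv (T n)))
            (scaleo (real_of_int (int n - (int p - 1) * int k) / real k)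
                    (mulv (T (nat (int n - (int p - 1) * int k)))))) \<and>
    (\<forall>n p. 1 \<le> n \<longrightarrow> int n = (int p - 1) * int k \<longrightarrow>
       modF (comm (Dop k m p) (mulv (T n))) (scaleo (1 / real k) (mulv (X 0)))) \<and>
    (\<forall>n p. 1 \<le> n \<longrightarrow> (1 \<le> p \<or> m < n) \<longrightarrow>
       modF (comm (pdo (TB n)) (Dop k m p))
            (scaleo (real n / real m) (pdo (TB (nat ((int p - 1) * int m + int n)))))) \<and>
    (\<forall>n. 1 \<le> n \<longrightarrow> n < m \<longrightarrow>
       modF (comm (pdo (TB n)) (Dop k m 0))
            (scaleo (real n / real m * real (m - n)) (mulv (TB (m - n))))) \<and>
    modF (comm (pdo (TB m)) (Dop k m 0)) (mulv (X 0)) \<and>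
    (\<forall>n p. 1 \<le> n \<longrightarrow> int n < (int p - 1) * int m \<longrightarrow>
       modF (comm (Dop k m p) (mulv (TB n)))
            (scaleo (1 / real m) (pdo (TB (nat ((int p - 1) * int m - int n)))))) \<and>
    (\<forall>n p. 1 \<le> n \<longrightarrow> int n > (int p - 1) * int m \<longrightarrow>
       modF (comm (Dop k m p) (mulv (TB n)))
            (scaleo (real_of_int (int n - (int p - 1) * int m) / real m)
                    (mulv (TB (nat (int n - (int p - 1) * int m)))))) \<and>
    (\<forall>n p. 1 \<le> n \<longrightarrow> int n = (int p - 1) * int m \<longrightarrow>
       modF (comm (Dop k m p) (mulv (TB n))) (scaleo (1 / real m) (mulv (X 0)))) \<and>
    (\<forall>p q. p + q > 1 \<longrightarrow>
       modF (comm (pdo (X q)) (Dop k m p))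
            (\<lambda>f a. real q * pd (X (p + q - 1)) f a
                   + 1 / real k * pd (T ((p + q - 1) * k)) f a
                   + 1 / real m * pd (TB ((p + q - 1) * m)) f a)) \<and>
    (\<forall>p q. p + q = 1 \<longrightarrow>
       modF (comm (pdo (X q)) (Dop k m p))
            (\<lambda>f a. real q * pd (X 0) f a + (1 / real k + 1 / real m) * a (X 0) * f a)) \<and>
    modF (comm (pdo (X 0)) (Dop k m 0)) (\<lambda>f a. (a (T k) + a (TB m)) * f a) \<and>
    (\<forall>p q. modF (comm (Dop k m p) (mulv (X q))) (\<lambda>f a. 0))"
proof -
  interpret t: family_pair k m k m T TB
    using assms by unfold_locales auto
  interpret tb: family_pair k m m k TB T
    using assms by unfold_locales auto
  show ?thesis
    using t.comm_pdo_family_Dop_raising t.comm_pdo_family_Dop0_below t.comm_pdo_family_Dop0_diagonal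
      t.comm_Dop_mulv_family_below t.comm_Dop_mulv_family_above t.comm_Dop_mulv_family_diagonal
      tb.comm_pdo_family_Dop_raising tb.comm_pdo_family_Dop0_below tb.comm_pdo_family_Dop0_diagonal
      tb.comm_Dop_mulv_family_below tb.comm_Dop_mulv_family_above tb.comm_Dop_mulv_family_diagonal
      comm_pdo_X_Dop_raising[OF assms] comm_pdo_X_Dop_unit[OF assms] comm_pdo_X0_Dop0[OF assms]
      comm_Dop_mulv_X[OF assms]
    by blast
qed

end
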